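(* Let $n\ge1$, $d=2^n$. For an $n$-qubit density matrix $\rho$ define $\tilde M_2(\rho)=-\log\frac{\sum_{P\in\mathcal{P}_n}\mathrm{tr}(P\rho)^4}{\sum_{P\in\mathcal{P}_n}\mathrm{tr}(P\rho)^2}$ (equivalently $\tilde M_2(\rho)=M_2(\rho)-S_2(\rho)$ with $M_2(\rho)=-\log\big(d\,\mathrm{tr}(Q\rho^{\otimes4})\big)$ and $S_2(\rho)=-\log\mathrm{tr}(\rho^2)$). Then: (i) $\tilde M_2(\rho)=0$ if and only if $\rho$ is a (mixed) stabilizer state; (ii) $\tilde M_2(C\rho C^\dagger)=\tilde M_2(\rho)$ for every $n$-qubit Clifford unitary $C$; (iii) $\tilde M_2(\rho\otimes\sigma)=\tilde M_2(\rho)+\tilde M_2(\sigma)$ for density matrices $\rho,\sigma$ on any numbers of qubits; in particular, if $S$ is a (mixed) stabilizer state then $\tilde M_2(\rho\otimes S)=\tilde M_2(\rho)$.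
   Context: Logarithms are base 2. $\mathcal{P}_n$ is the set of the $4^n$ $n$-qubit Pauli strings $\sigma_1\otimes\cdots\otimes\sigma_n$, $\sigma_i\in\{I,X,Y,Z\}$; $Q=d^{-2}\sum_{P\in\mathcal{P}_n}P^{\otimes4}$. The Clifford group consists of unitaries $C$ with $CPC^\dagger\in\{\pm1,\pm i\}\mathcal{P}_n$ for all $P\in\mathcal{P}_n$. A (mixed) stabilizer state is a positive semidefinite operator of the form $\chi=\frac{I}{d}+\frac1d\sum_{P\in G}\phi_P P$, where $G\subseteq\mathcal{P}_n\setminus\{I\}$ with $0\le|G|\le d-1$ and $\phi_P\in\{-1,+1\}$ (pure stabilizer states are exactly those with $|G|=d-1$). *)

theory Defs
  imports "Jordan_Normal_Form.Matrix" Complex_Main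
begin

definition mtrace :: "complex mat \<Rightarrow> complex" where
  "mtrace A = (\<Sum>i<dim_row A. A $$ (i, i))"

definition dagger :: "complex mat \<Rightarrow> complex mat" where
  "dagger A = mat (dim_col A) (dim_row A) (\<lambda>(i, j). cnj (A $$ (j, i)))"

definition kron :: "complex mat \<Rightarrow> complex mat \<Rightarrow> complex mat" where
  "kron A B = mat (dim_row A * dim_row B) (dim_col A * dim_col B)
     (\<lambda>(i, j). A $$ (i div dim_row B, j div dim_col B) * B $$ (i mod dim_row B, j mod dim_col B))"

text \<open>Single-qubit Paulis: 0 = I, 1 = X, 2 = Y, 3 = Z.\<close>
definition pauli1 :: "nat \<Rightarrow> complex mat" where
  "pauli1 k = (if k = 0 then mat_of_rows_list 2 [[1, 0], [0, 1]]
     else if k = 1 then mat_of_rows_list 2 [[0, 1], [1, 0]]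
     else if k = 2 then mat_of_rows_list 2 [[0, - \<i>], [\<i>, 0]]
     else mat_of_rows_list 2 [[1, 0], [0, - 1]])"

definition pauli_string :: "nat list \<Rightarrow> complex mat" where
  "pauli_string ks = foldr (\<lambda>k M. kron (pauli1 k) M) ks (1\<^sub>m 1)"

definition pauli_labels :: "nat \<Rightarrow> nat list set" where
  "pauli_labels n = {ks. length ks = n \<and> set ks \<subseteq> {0, 1, 2, 3}}"

definition psd :: "complex mat \<Rightarrow> bool" where
  "psd A \<longleftrightarrow> A \<in> carrier_mat (dim_row A) (dim_row A) \<and>
     (\<forall>v \<in> carrier_vec (dim_row A).
        let q = (\<Sum>i<dim_row A. cnj (v $ i) * (A *\<^sub>v v) $ i) in Im q = 0 \<and> Re q \<ge> 0)"

definition density_matrix :: "nat \<Rightarrow> complex mat \<Rightarrow> bool" where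
  "density_matrix n \<rho> \<longleftrightarrow> \<rho> \<in> carrier_mat (2 ^ n) (2 ^ n) \<and> psd \<rho> \<and> mtrace \<rho> = 1"

text \<open>tr(P rho) is real for Hermitian rho; we use its real part.\<close>
definition M2t :: "nat \<Rightarrow> complex mat \<Rightarrow> real" where
  "M2t n \<rho> = - log 2
     ((\<Sum>P\<in>pauli_labels n. (Re (mtrace (pauli_string P * \<rho>))) ^ 4) /
      (\<Sum>P\<in>pauli_labels n. (Re (mtrace (pauli_string P * \<rho>))) ^ 2))"

definition stabilizer_state :: "nat \<Rightarrow> complex mat \<Rightarrow> bool" where
  "stabilizer_state n \<chi> \<longleftrightarrow>
     (\<exists>G \<phi>. G \<subseteq> pauli_labels n - {replicate n 0} \<and> card G \<le> 2 ^ n - 1 \<and>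
        (\<forall>P\<in>G. \<phi> P \<in> {-1, 1 :: complex}) \<and>
        \<chi> = mat (2 ^ n) (2 ^ n) (\<lambda>(i, j).
              (if i = j then 1 else 0) / 2 ^ n
              + (1 / 2 ^ n) * (\<Sum>P\<in>G. \<phi> P * pauli_string P $$ (i, j))) \<and>
        psd \<chi>)"

definition unitary :: "nat \<Rightarrow> complex mat \<Rightarrow> bool" where
  "unitary d C \<longleftrightarrow> C \<in> carrier_mat d d \<and> C * dagger C = 1\<^sub>m d \<and> dagger C * C = 1\<^sub>m d"

definition clifford :: "nat \<Rightarrow> complex mat \<Rightarrow> bool" where
  "clifford n C \<longleftrightarrow> unitary (2 ^ n) C \<and>
     (\<forall>P\<in>pauli_labels n. \<exists>Q\<in>pauli_labels n. \<exists>c\<in>{1, -1, \<i>, - \<i>}.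
        C * pauli_string P * dagger C = c \<cdot>\<^sub>m pauli_string Q)"

end

theory Submission
  imports Defs
begin

text \<open>Everything is read off the Pauli coefficients \<open>a\<^sub>P = tr (P \<rho>)\<close> of a density matrix:
  they are real, \<open>a\<^sub>I = 1\<close>, \<open>\<bar>a\<^sub>P\<bar> \<le> 1\<close> because \<open>1 \<plusminus> P\<close> is positive, and by Parseval
  \<open>\<Sum> a\<^sub>P\<^sup>2 = d tr \<rho>\<^sup>2 \<le> d\<close>. Since \<open>a\<^sub>P\<^sup>4 \<le> a\<^sub>P\<^sup>2\<close>, the magic vanishes exactly when every
  \<open>a\<^sub>P \<in> {-1, 0, 1}\<close>; by the expansion \<open>\<rho> = d\<^sup>-\<^sup>1 \<Sum> a\<^sub>P P\<close> this is the stabilizer form, the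
  Parseval bound limiting the number of nonzero \<open>a\<^sub>P\<close> to \<open>d\<close>. A Clifford unitary permutes the
  Pauli strings up to phases of modulus one, hence only permutes the \<open>a\<^sub>P\<^sup>2\<close>; the coefficients
  of \<open>\<rho> \<otimes> \<sigma>\<close> are the products \<open>a\<^sub>P b\<^sub>Q\<close>, so both power sums are multiplicative and their
  log-ratio is additive.\<close>

section \<open>Traces, adjoints and Kronecker products\<close>

lemma sum_lessThan_mult: "(\<Sum>t<(a::nat) * b. f t) = (\<Sum>t1<a. \<Sum>t2<b. f (t1 * b + t2))"
proof (induction a)
  case 0
  then show ?case by simp
next
  case (Suc a)
  have "{..<Suc a * b} = {..<a * b} \<union> {a * b..<a * b + b}" by auto
  then have "(\<Sum>t<Suc a * b. f t) = (\<Sum>t<a * b. f t) + (\<Sum>t\<in>{a * b..<a * b + b}. f t)"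
    by (simp add: sum.union_disjoint ivl_disj_int)
  also have "(\<Sum>t\<in>{a * b..<a * b + b}. f t) = (\<Sum>t2<b. f (a * b + t2))"
    by (rule sum.reindex_bij_witness[of _ "\<lambda>t. a * b + t" "\<lambda>t. t - a * b"]) auto
  finally show ?case using Suc by simp
qed

lemma less_mult_imp_div_mod_less: "(i::nat) < a * b \<Longrightarrow> i div b < a \<and> i mod b < b"
  by (metis less_mult_imp_div_less mod_less_divisor mult_0_right not_gr_zero not_less_zero)

lemma index_mult_mat_sum:
  "A \<in> carrier_mat r m \<Longrightarrow> B \<in> carrier_mat m c \<Longrightarrow> i < r \<Longrightarrow> j < c \<Longrightarrow>
   (A * B) $$ (i, j) = (\<Sum>k<m. A $$ (i, k) * B $$ (k, j))"
  by (auto simp: scalar_prod_def lessThan_atLeast0 intro!: sum.cong)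

lemma mtrace_mult:
  "A \<in> carrier_mat r m \<Longrightarrow> B \<in> carrier_mat m r \<Longrightarrow>
   mtrace (A * B) = (\<Sum>i<r. \<Sum>k<m. A $$ (i, k) * B $$ (k, i))"
  by (simp add: mtrace_def index_mult_mat_sum del: index_mult_mat(1))

lemma mtrace_mult_commute:
  "A \<in> carrier_mat r m \<Longrightarrow> B \<in> carrier_mat m r \<Longrightarrow> mtrace (A * B) = mtrace (B * A)"
  by (simp add: mtrace_mult mult.commute sum.swap[of _ "{..<r}"])

lemma mtrace_smult: "A \<in> carrier_mat d d \<Longrightarrow> mtrace (c \<cdot>\<^sub>m A) = c * mtrace A"
  by (auto simp: mtrace_def sum_distrib_left intro!: sum.cong)

lemma mtrace_smult_mult:
  assumes "A \<in> carrier_mat d d" "B \<in> carrier_mat d d"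
  shows "mtrace ((a \<cdot>\<^sub>m A) * (b \<cdot>\<^sub>m B)) = a * b * mtrace (A * B)"
proof -
  have "(a \<cdot>\<^sub>m A) * (b \<cdot>\<^sub>m B) = (a * b) \<cdot>\<^sub>m (A * B)"
    using assms by (simp add: mult_smult_assoc_mat[of _ d d _ d] mult_smult_distrib[of _ d d _ d])
      (rule eq_matI, auto)
  then show ?thesis using assms by (simp add: mtrace_smult[of _ d])
qed

lemma dagger_dims [simp]: "dim_row (dagger A) = dim_col A" "dim_col (dagger A) = dim_row A"
  by (simp_all add: dagger_def)

lemma index_dagger: "i < dim_col A \<Longrightarrow> j < dim_row A \<Longrightarrow> dagger A $$ (i, j) = cnj (A $$ (j, i))"
  by (simp add: dagger_def)

lemma dagger_carrier: "C \<in> carrier_mat d d \<Longrightarrow> dagger C \<in> carrier_mat d d"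
  by (auto simp: dagger_def)

lemma unitary_conj_mtrace_mult:
  assumes U: "unitary d C" and X: "X \<in> carrier_mat d d" and A: "A \<in> carrier_mat d d"
  shows "mtrace ((C * X * dagger C) * (C * A * dagger C)) = mtrace (X * A)"
proof -
  have C: "C \<in> carrier_mat d d" and CC: "dagger C * C = 1\<^sub>m d" using U by (auto simp: unitary_def)
  have D: "dagger C \<in> carrier_mat d d" using C by (rule dagger_carrier)
  have "(C * X * dagger C) * (C * A * dagger C) = C * (X * (dagger C * C) * A * dagger C)"
    using C D X A by (simp add: assoc_mult_mat[of _ d d _ d _ d])
  also have "\<dots> = C * (X * A * dagger C)" using CC X A by simp
  finally have "mtrace ((C * X * dagger C) * (C * A * dagger C)) = mtrace ((X * A * dagger C) * C)"
    using mtrace_mult_commute[OF C, of "X * A * dagger C"] X A D by simp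
  also have "(X * A * dagger C) * C = X * A * (dagger C * C)"
    using X A D C by (simp add: assoc_mult_mat[of _ d d _ d _ d])
  finally show ?thesis using CC X A by simp
qed

definition hermitian :: "complex mat \<Rightarrow> bool" where
  "hermitian A \<longleftrightarrow> dagger A = A"

lemma hermitian_iff:
  assumes "A \<in> carrier_mat d d"
  shows "hermitian A \<longleftrightarrow> (\<forall>i<d. \<forall>j<d. cnj (A $$ (i, j)) = A $$ (j, i))"
  using assms by (auto simp: hermitian_def mat_eq_iff index_dagger)

lemma hermitian_index:
  "A \<in> carrier_mat d d \<Longrightarrow> hermitian A \<Longrightarrow> i < d \<Longrightarrow> j < d \<Longrightarrow> cnj (A $$ (i, j)) = A $$ (j, i)"
  by (simp add: hermitian_iff)

lemma hermitian_mtrace_mult_real: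
  assumes A: "A \<in> carrier_mat d d" "hermitian A" and B: "B \<in> carrier_mat d d" "hermitian B"
  shows "Im (mtrace (A * B)) = 0"
proof -
  have "cnj (mtrace (A * B)) = (\<Sum>i<d. \<Sum>k<d. A $$ (k, i) * B $$ (i, k))"
    unfolding mtrace_mult[OF A(1) B(1)] by (simp add: hermitian_index[OF A] hermitian_index[OF B])
  also have "\<dots> = mtrace (A * B)"
    unfolding mtrace_mult[OF A(1) B(1)] by (rule sum.swap)
  finally show ?thesis by (metis Reals_cnj_iff complex_is_Real_iff)
qed

lemma hermitian_conj:
  assumes C: "C \<in> carrier_mat d d" and A: "A \<in> carrier_mat d d" "hermitian A"
  shows "hermitian (C * A * dagger C)"
proof -
  have D: "dagger C \<in> carrier_mat d d" using C by (rule dagger_carrier)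
  have CAD: "C * A * dagger C \<in> carrier_mat d d" using C A D by simp
  have entry: "(C * A * dagger C) $$ (i, j) = (\<Sum>l<d. \<Sum>k<d. C $$ (i, l) * A $$ (l, k) * cnj (C $$ (j, k)))"
    if "i < d" "j < d" for i j
    using that C A D
    by (simp add: index_mult_mat_sum[of _ d d _ d] index_dagger sum_distrib_left mult.assoc
        del: index_mult_mat(1))
  show ?thesis
    unfolding hermitian_iff[OF CAD]
  proof (intro allI impI)
    fix i j assume ij: "i < d" "j < d"
    have "cnj ((C * A * dagger C) $$ (i, j)) = (\<Sum>l<d. \<Sum>k<d. C $$ (j, k) * A $$ (k, l) * cnj (C $$ (i, l)))"
      unfolding entry[OF ij] cnj_sum by (intro sum.cong refl) (auto simp: hermitian_index[OF A] mult_ac)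
    also have "\<dots> = (C * A * dagger C) $$ (j, i)"
      unfolding entry[OF ij(2,1)] by (rule sum.swap)
    finally show "cnj ((C * A * dagger C) $$ (i, j)) = (C * A * dagger C) $$ (j, i)" .
  qed
qed

lemma kron_dims [simp]:
  "dim_row (kron A B) = dim_row A * dim_row B" "dim_col (kron A B) = dim_col A * dim_col B"
  by (auto simp: kron_def)

lemma kron_carrier: "A \<in> carrier_mat a a' \<Longrightarrow> B \<in> carrier_mat b b' \<Longrightarrow> kron A B \<in> carrier_mat (a * b) (a' * b')"
  by auto

lemma index_kron:
  "i < dim_row A * dim_row B \<Longrightarrow> j < dim_col A * dim_col B \<Longrightarrow>
   kron A B $$ (i, j) = A $$ (i div dim_row B, j div dim_col B) * B $$ (i mod dim_row B, j mod dim_col B)"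
  by (auto simp: kron_def)


lemma kron_mult:
  assumes A: "A \<in> carrier_mat a a'" and B: "B \<in> carrier_mat b b'"
    and C: "C \<in> carrier_mat a' a''" and D: "D \<in> carrier_mat b' b''"
  shows "kron A B * kron C D = kron (A * C) (B * D)"
proof (rule eq_matI)
  fix i j assume "i < dim_row (kron (A * C) (B * D))" "j < dim_col (kron (A * C) (B * D))"
  then have i: "i < a * b" and j: "j < a'' * b''" using A B C D by auto
  note ii = less_mult_imp_div_mod_less[OF i] and jj = less_mult_imp_div_mod_less[OF j]
  have "(kron A B * kron C D) $$ (i, j) = (\<Sum>t<a' * b'. kron A B $$ (i, t) * kron C D $$ (t, j))"
    using A B C D i j by (subst index_mult_mat_sum[of _ "a * b" "a' * b'" _ "a'' * b''"]) auto
  also have "\<dots> = (\<Sum>t1<a'. \<Sum>t2<b'. kron A B $$ (i, t1 * b' + t2) * kron C D $$ (t1 * b' + t2, j))"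
    by (rule sum_lessThan_mult)
  also have "\<dots> = (\<Sum>t1<a'. \<Sum>t2<b'. (A $$ (i div b, t1) * C $$ (t1, j div b'')) *
                                     (B $$ (i mod b, t2) * D $$ (t2, j mod b'')))"
  proof (intro sum.cong refl)
    fix t1 t2 assume t1: "t1 \<in> {..<a'}" and t2: "t2 \<in> {..<b'}"
    have "t1 * b' + t2 < (t1 + 1) * b'" using t2 by simp
    also have "\<dots> \<le> a' * b'" using t1 by (intro mult_right_mono) auto
    finally have "t1 * b' + t2 < a' * b'" .
    moreover have "(t1 * b' + t2) div b' = t1" "(t1 * b' + t2) mod b' = t2" using t2 by auto
    ultimately show "kron A B $$ (i, t1 * b' + t2) * kron C D $$ (t1 * b' + t2, j) =
        (A $$ (i div b, t1) * C $$ (t1, j div b'')) * (B $$ (i mod b, t2) * D $$ (t2, j mod b''))"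
      using A B C D i j by (simp add: index_kron)
  qed
  also have "\<dots> = (\<Sum>t1<a'. A $$ (i div b, t1) * C $$ (t1, j div b'')) *
                  (\<Sum>t2<b'. B $$ (i mod b, t2) * D $$ (t2, j mod b''))"
    by (simp add: sum_product)
  also have "\<dots> = (A * C) $$ (i div b, j div b'') * (B * D) $$ (i mod b, j mod b'')"
    using ii jj by (simp add: index_mult_mat_sum[OF A C] index_mult_mat_sum[OF B D] del: index_mult_mat)
  also have "\<dots> = kron (A * C) (B * D) $$ (i, j)"
    using A B C D i j by (subst index_kron) auto
  finally show "(kron A B * kron C D) $$ (i, j) = kron (A * C) (B * D) $$ (i, j)" .
qed (use A B C D in auto)

lemma mtrace_kron:
  assumes A: "A \<in> carrier_mat a a" and B: "B \<in> carrier_mat b b"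
  shows "mtrace (kron A B) = mtrace A * mtrace B"
proof -
  have "mtrace (kron A B) = (\<Sum>t1<a. \<Sum>t2<b. kron A B $$ (t1 * b + t2, t1 * b + t2))"
    using A B by (simp add: mtrace_def sum_lessThan_mult)
  also have "\<dots> = (\<Sum>t1<a. \<Sum>t2<b. A $$ (t1, t1) * B $$ (t2, t2))"
  proof (intro sum.cong refl)
    fix t1 t2 assume t1: "t1 \<in> {..<a}" and t2: "t2 \<in> {..<b}"
    have "t1 * b + t2 < (t1 + 1) * b" using t2 by simp
    also have "\<dots> \<le> a * b" using t1 by (intro mult_right_mono) auto
    finally have "t1 * b + t2 < a * b" .
    moreover have "(t1 * b + t2) div b = t1" "(t1 * b + t2) mod b = t2" using t2 by auto
    ultimately show "kron A B $$ (t1 * b + t2, t1 * b + t2) = A $$ (t1, t1) * B $$ (t2, t2)"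
      using A B by (simp add: index_kron)
  qed
  also have "\<dots> = mtrace A * mtrace B" using A B by (simp add: mtrace_def sum_product)
  finally show ?thesis .
qed

lemma kron_one: "kron (1\<^sub>m a) (1\<^sub>m b) = 1\<^sub>m (a * b)"
proof (rule eq_matI)
  fix i j assume "i < dim_row (1\<^sub>m (a * b))" "j < dim_col (1\<^sub>m (a * b))"
  then have i: "i < a * b" and j: "j < a * b" by auto
  then have "0 < b" by (cases b) auto
  then have "i = j \<longleftrightarrow> i div b = j div b \<and> i mod b = j mod b"
    by (metis div_mult_mod_eq)
  then show "kron (1\<^sub>m a) (1\<^sub>m b) $$ (i, j) = 1\<^sub>m (a * b) $$ (i, j)"
    using i j less_mult_imp_div_mod_less[OF i] less_mult_imp_div_mod_less[OF j] by (simp add: index_kron)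
qed auto

lemma kron_one_left: "kron (1\<^sub>m 1) B = B"
  by (rule eq_matI) (auto simp: index_kron)

lemma kron_assoc:
  assumes A: "A \<in> carrier_mat ra ca" and B: "B \<in> carrier_mat rb cb" and C: "C \<in> carrier_mat rc cc"
  shows "kron A (kron B C) = kron (kron A B) C"
proof (rule eq_matI)
  fix i j assume "i < dim_row (kron (kron A B) C)" "j < dim_col (kron (kron A B) C)"
  then have i: "i < ra * rb * rc" and j: "j < ca * cb * cc" using A B C by auto
  then have i': "i < ra * (rb * rc)" and j': "j < ca * (cb * cc)" by (simp_all add: mult.assoc)
  note ii = less_mult_imp_div_mod_less[OF i] and jj = less_mult_imp_div_mod_less[OF j]
  have "i div (rb * rc) = i div rc div rb" "j div (cb * cc) = j div cc div cb"
    by (metis div_mult2_eq mult.commute)+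
  moreover have "i mod (rb * rc) = rc * (i div rc mod rb) + i mod rc"
    "j mod (cb * cc) = cc * (j div cc mod cb) + j mod cc"
    by (metis mod_mult2_eq mult.commute)+
  then have "i mod (rb * rc) div rc = i div rc mod rb" "j mod (cb * cc) div cc = j div cc mod cb"
    using ii jj by simp_all
  moreover have "i mod (rb * rc) mod rc = i mod rc" "j mod (cb * cc) mod cc = j mod cc"
    by (simp_all add: mod_mod_cancel)
  moreover have "i mod (rb * rc) < rb * rc" "j mod (cb * cc) < cb * cc"
    using less_mult_imp_div_mod_less[OF i'] less_mult_imp_div_mod_less[OF j'] by auto
  moreover have "i div rc < ra * rb" "j div cc < ca * cb" using ii jj by auto
  ultimately show "kron A (kron B C) $$ (i, j) = kron (kron A B) C $$ (i, j)"
    using A B C i j i' j' by (simp add: index_kron)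
qed (use A B C in auto)

lemma hermitian_kron:
  assumes A: "A \<in> carrier_mat a a" "hermitian A" and B: "B \<in> carrier_mat b b" "hermitian B"
  shows "hermitian (kron A B)"
proof -
  have "cnj (kron A B $$ (i, j)) = kron A B $$ (j, i)" if "i < a * b" "j < a * b" for i j
    using that A B less_mult_imp_div_mod_less[OF that(1)] less_mult_imp_div_mod_less[OF that(2)]
    by (simp add: index_kron hermitian_index[OF A] hermitian_index[OF B])
  then show ?thesis using A B by (simp add: hermitian_iff[OF kron_carrier[OF A(1) B(1)]])
qed

section \<open>Pauli strings\<close>

lemma pauli1_carrier [simp]: "pauli1 k \<in> carrier_mat 2 2"
  by (auto simp: pauli1_def mat_of_rows_list_def)

lemma pauli1_dims [simp]: "dim_row (pauli1 k) = 2" "dim_col (pauli1 k) = 2"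
  using carrier_matD[OF pauli1_carrier[of k]] by auto

lemma index_pauli1:
  "i < 2 \<Longrightarrow> j < 2 \<Longrightarrow> pauli1 k $$ (i, j) =
     (if k = 0 then (if i = j then 1 else 0)
      else if k = 1 then (if i = j then 0 else 1)
      else if k = 2 then (if i = j then 0 else if i = 0 then - \<i> else \<i>)
      else (if i = j then (if i = 0 then 1 else -1) else 0))"
  by (auto simp: pauli1_def mat_of_rows_list_def less_2_cases_iff)

lemma sum_lessThan_2: "(\<Sum>i<(2::nat). f i) = f 0 + f 1"
  by (simp add: numeral_2_eq_2)

lemma sum_lessThan_4: "(\<Sum>i<(4::nat). f i) = f 0 + f 1 + f 2 + f 3"
  by (simp add: numeral_eq_Suc add.assoc)

lemma hermitian_pauli1: "hermitian (pauli1 k)"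
  by (auto simp: hermitian_iff[OF pauli1_carrier] index_pauli1 less_2_cases_iff)

lemma pauli1_square: "pauli1 k * pauli1 k = 1\<^sub>m 2"
  by (rule eq_matI)
    (auto simp: index_mult_mat_sum[OF pauli1_carrier pauli1_carrier] sum_lessThan_2 index_pauli1
       less_2_cases_iff simp del: index_mult_mat(1))

lemma mtrace_pauli1_mult:
  "a < 4 \<Longrightarrow> b < 4 \<Longrightarrow> mtrace (pauli1 a * pauli1 b) = (if a = b then 2 else 0)"
  by (auto simp: mtrace_mult[OF pauli1_carrier pauli1_carrier] sum_lessThan_2 index_pauli1
      eval_nat_numeral less_Suc_eq)

lemma pauli1_completeness:
  "i < 2 \<Longrightarrow> j < 2 \<Longrightarrow> k < 2 \<Longrightarrow> l < 2 \<Longrightarrow>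
   (\<Sum>a<4. pauli1 a $$ (i, j) * pauli1 a $$ (k, l)) = (if i = l \<and> j = k then 2 else 0)"
  by (auto simp: sum_lessThan_4 index_pauli1 less_2_cases_iff)

lemma pauli_string_Nil: "pauli_string [] = 1\<^sub>m 1"
  by (simp add: pauli_string_def)

lemma pauli_string_Cons: "pauli_string (k # ks) = kron (pauli1 k) (pauli_string ks)"
  by (simp add: pauli_string_def)

lemma pauli_string_carrier: "pauli_string ks \<in> carrier_mat (2 ^ length ks) (2 ^ length ks)"
  by (induction ks) (auto simp: pauli_string_Cons pauli_string_Nil)

lemma pauli_string_dims [simp]:
  "dim_row (pauli_string ks) = 2 ^ length ks" "dim_col (pauli_string ks) = 2 ^ length ks"
  using carrier_matD[OF pauli_string_carrier[of ks]] by auto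

lemma index_pauli_string_Cons:
  "i < 2 * 2 ^ length ks \<Longrightarrow> j < 2 * 2 ^ length ks \<Longrightarrow>
   pauli_string (k # ks) $$ (i, j) = pauli1 k $$ (i div 2 ^ length ks, j div 2 ^ length ks) *
     pauli_string ks $$ (i mod 2 ^ length ks, j mod 2 ^ length ks)"
  by (simp add: pauli_string_Cons index_kron)

lemma pauli_string_append: "pauli_string (ks @ ls) = kron (pauli_string ks) (pauli_string ls)"
proof (induction ks)
  case Nil
  then show ?case by (simp only: pauli_string_Nil append_Nil kron_one_left)
next
  case (Cons k ks)
  then show ?case
    by (simp add: pauli_string_Cons kron_assoc[OF pauli1_carrier pauli_string_carrier pauli_string_carrier])
qed

lemma pauli_string_replicate_0: "pauli_string (replicate n 0) = 1\<^sub>m (2 ^ n)"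
proof (induction n)
  case 0
  then show ?case by (simp add: pauli_string_Nil)
next
  case (Suc n)
  have "pauli1 0 = 1\<^sub>m 2"
    by (rule eq_matI) (auto simp: index_pauli1)
  then show ?case by (simp add: pauli_string_Cons Suc kron_one)
qed

lemma hermitian_pauli_string: "hermitian (pauli_string ks)"
proof (induction ks)
  case Nil
  show ?case by (simp add: pauli_string_Nil hermitian_iff[OF one_carrier_mat])
next
  case (Cons k ks)
  then show ?case
    unfolding pauli_string_Cons by (rule hermitian_kron[OF pauli1_carrier hermitian_pauli1 pauli_string_carrier])
qed

lemma pauli_string_square: "pauli_string ks * pauli_string ks = 1\<^sub>m (2 ^ length ks)"
  by (induction ks)
    (simp_all add: pauli_string_Nil pauli_string_Cons pauli1_square kron_one
      kron_mult[OF pauli1_carrier pauli_string_carrier pauli1_carrier pauli_string_carrier])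

lemma pauli_labels_0: "pauli_labels 0 = {[]}"
  by (auto simp: pauli_labels_def)

lemma pauli_labels_Suc: "pauli_labels (Suc n) = (\<lambda>(a, P). a # P) ` ({..<4} \<times> pauli_labels n)"
proof
  show "pauli_labels (Suc n) \<subseteq> (\<lambda>(a, P). a # P) ` ({..<4} \<times> pauli_labels n)"
  proof
    fix xs assume xs: "xs \<in> pauli_labels (Suc n)"
    then obtain a P where "xs = a # P" by (cases xs) (auto simp: pauli_labels_def)
    moreover have "a < 4" "P \<in> pauli_labels n" using xs calculation by (auto simp: pauli_labels_def)
    ultimately show "xs \<in> (\<lambda>(a, P). a # P) ` ({..<4} \<times> pauli_labels n)" by force
  qed
qed (auto simp: pauli_labels_def)

lemma pauli_labels_add: "pauli_labels (m + k) = (\<lambda>(P, Q). P @ Q) ` (pauli_labels m \<times> pauli_labels k)"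
proof
  show "pauli_labels (m + k) \<subseteq> (\<lambda>(P, Q). P @ Q) ` (pauli_labels m \<times> pauli_labels k)"
  proof
    fix R assume R: "R \<in> pauli_labels (m + k)"
    have "take m R \<in> pauli_labels m" "drop m R \<in> pauli_labels k"
      using R set_take_subset[of m R] set_drop_subset[of m R] by (auto simp: pauli_labels_def)
    then show "R \<in> (\<lambda>(P, Q). P @ Q) ` (pauli_labels m \<times> pauli_labels k)"
      by (metis (no_types, lifting) SigmaI case_prod_conv image_eqI append_take_drop_id)
  qed
qed (auto simp: pauli_labels_def)

lemma finite_pauli_labels [simp]: "finite (pauli_labels n)"
  by (induction n) (simp_all add: pauli_labels_0 pauli_labels_Suc)

lemma length_pauli_label: "P \<in> pauli_labels n \<Longrightarrow> length P = n"
  by (simp add: pauli_labels_def)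

lemma pauli_label_carrier: "P \<in> pauli_labels n \<Longrightarrow> pauli_string P \<in> carrier_mat (2 ^ n) (2 ^ n)"
  using pauli_string_carrier[of P] by (simp add: length_pauli_label)

lemma replicate_0_pauli_label: "replicate n 0 \<in> pauli_labels n"
  by (auto simp: pauli_labels_def set_replicate_conv_if)

lemma sum_pauli_labels_Suc:
  "(\<Sum>x\<in>pauli_labels (Suc n). g x) = (\<Sum>a<4. \<Sum>P\<in>pauli_labels n. g (a # P))"
proof -
  have "inj_on (\<lambda>(a, P). a # P) ({..<4::nat} \<times> pauli_labels n)" by (auto simp: inj_on_def)
  then show ?thesis
    by (simp add: pauli_labels_Suc sum.reindex sum.cartesian_product split_def)
qed

lemma sum_pauli_labels_add:
  "(\<Sum>R\<in>pauli_labels (m + k). g R) = (\<Sum>P\<in>pauli_labels m. \<Sum>Q\<in>pauli_labels k. g (P @ Q))"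
proof -
  have "inj_on (\<lambda>(P, Q). P @ Q) (pauli_labels m \<times> pauli_labels k)"
    by (auto simp: inj_on_def pauli_labels_def)
  then show ?thesis
    by (simp add: pauli_labels_add sum.reindex sum.cartesian_product split_def)
qed

lemma mtrace_pauli_string_mult:
  "P \<in> pauli_labels n \<Longrightarrow> Q \<in> pauli_labels n \<Longrightarrow>
   mtrace (pauli_string P * pauli_string Q) = (if P = Q then 2 ^ n else 0)"
proof (induction n arbitrary: P Q)
  case 0
  then show ?case by (simp add: pauli_labels_0 pauli_string_Nil mtrace_def)
next
  case (Suc n)
  from Suc.prems obtain a P' b Q' where PQ: "P = a # P'" "Q = b # Q'" and ab: "a < 4" "b < 4"
    and P': "P' \<in> pauli_labels n" and Q': "Q' \<in> pauli_labels n"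
    unfolding pauli_labels_Suc by auto
  note cP = pauli_label_carrier[OF P'] and cQ = pauli_label_carrier[OF Q']
  have "mtrace (pauli_string P * pauli_string Q) =
        mtrace (kron (pauli1 a * pauli1 b) (pauli_string P' * pauli_string Q'))"
    unfolding PQ pauli_string_Cons by (simp add: kron_mult[OF pauli1_carrier cP pauli1_carrier cQ])
  also have "\<dots> = mtrace (pauli1 a * pauli1 b) * mtrace (pauli_string P' * pauli_string Q')"
    by (rule mtrace_kron[OF mult_carrier_mat[OF pauli1_carrier pauli1_carrier] mult_carrier_mat[OF cP cQ]])
  finally show ?case using Suc.IH[OF P' Q'] PQ ab by (simp add: mtrace_pauli1_mult)
qed

lemma pauli_string_completeness:
  "i < 2 ^ n \<Longrightarrow> j < 2 ^ n \<Longrightarrow> k < 2 ^ n \<Longrightarrow> l < 2 ^ n \<Longrightarrow>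
   (\<Sum>P\<in>pauli_labels n. pauli_string P $$ (i, j) * pauli_string P $$ (k, l)) =
   (if i = l \<and> j = k then 2 ^ n else 0)"
proof (induction n arbitrary: i j k l)
  case 0
  then show ?case by (simp add: pauli_labels_0 pauli_string_Nil)
next
  case (Suc n)
  define N :: nat where "N = 2 ^ n"
  have N: "0 < N" by (simp add: N_def)
  have lt: "i div N < 2" "j div N < 2" "k div N < 2" "l div N < 2"
     "i mod N < 2 ^ n" "j mod N < 2 ^ n" "k mod N < 2 ^ n" "l mod N < 2 ^ n"
    using Suc.prems N by (auto simp: N_def less_mult_imp_div_less)
  have "(\<Sum>P\<in>pauli_labels (Suc n). pauli_string P $$ (i, j) * pauli_string P $$ (k, l))
     = (\<Sum>a<4. \<Sum>P\<in>pauli_labels n. (pauli1 a $$ (i div N, j div N) * pauli1 a $$ (k div N, l div N)) *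
          (pauli_string P $$ (i mod N, j mod N) * pauli_string P $$ (k mod N, l mod N)))"
    unfolding sum_pauli_labels_Suc using Suc.prems
    by (intro sum.cong refl) (auto simp: index_pauli_string_Cons length_pauli_label N_def)
  also have "\<dots> = (\<Sum>a<4. pauli1 a $$ (i div N, j div N) * pauli1 a $$ (k div N, l div N)) *
        (\<Sum>P\<in>pauli_labels n. pauli_string P $$ (i mod N, j mod N) * pauli_string P $$ (k mod N, l mod N))"
    by (simp only: sum_product)
  also have "\<dots> = (if i div N = l div N \<and> j div N = k div N then 2 else 0) *
       (if i mod N = l mod N \<and> j mod N = k mod N then 2 ^ n else 0)"
    using lt by (simp add: pauli1_completeness Suc.IH N_def)
  also have "\<dots> = (if i = l \<and> j = k then 2 ^ Suc n else 0)"
  proof -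
    have div_mod_eq: "x = y \<longleftrightarrow> x div N = y div N \<and> x mod N = y mod N" for x y :: nat
      by (metis div_mult_mod_eq)
    show ?thesis unfolding div_mod_eq[of i l] div_mod_eq[of j k] by (simp add: N_def)
  qed
  finally show ?case .
qed

section \<open>Positive semidefinite matrices\<close>

definition quad_form :: "complex mat \<Rightarrow> nat \<Rightarrow> (nat \<Rightarrow> complex) \<Rightarrow> complex" where
  "quad_form A N f = (\<Sum>i<N. \<Sum>j<N. cnj (f i) * A $$ (i, j) * f j)"

lemma psd_quad_form:
  assumes "psd A" "A \<in> carrier_mat N N"
  shows "Im (quad_form A N f) = 0 \<and> 0 \<le> Re (quad_form A N f)"
proof -
  have "(\<Sum>i<dim_row A. cnj (vec N f $ i) * (A *\<^sub>v vec N f) $ i) = quad_form A N f"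
    using assms(2) unfolding quad_form_def
    by (auto simp: scalar_prod_def lessThan_atLeast0 sum_distrib_left mult.assoc intro!: sum.cong)
  moreover have "vec N f \<in> carrier_vec (dim_row A)" using assms(2) by auto
  ultimately show ?thesis using assms(1) unfolding psd_def Let_def by metis
qed

lemma quad_form_one_point:
  "i < N \<Longrightarrow> quad_form A N (\<lambda>t. if t = i then x else 0) = cnj x * A $$ (i, i) * x"
  unfolding quad_form_def
  by (simp add: if_distrib[of cnj] if_distrib[of "\<lambda>z. z * _"] if_distrib[of "\<lambda>z. _ * z"] sum.delta
      cong: if_cong)

lemma quad_form_two_points:
  assumes "i < N" "j < N" "i \<noteq> j"
  shows "quad_form A N (\<lambda>t. if t = i then x else if t = j then y else 0) =
    cnj x * A $$ (i, i) * x + cnj x * A $$ (i, j) * y + cnj y * A $$ (j, i) * x + cnj y * A $$ (j, j) * y"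
proof -
  have split: "(\<lambda>t. if t = i then x else if t = j then y else 0) =
               (\<lambda>t. (if t = i then x else 0) + (if t = j then y else 0))"
    using assms by auto
  show ?thesis using assms unfolding quad_form_def split
    by (simp add: distrib_left distrib_right sum.distrib if_distrib[of cnj] if_distrib[of "\<lambda>z. z * _"]
       if_distrib[of "\<lambda>z. _ * z"] sum.delta cong: if_cong)
qed

lemma psd_index_diag:
  assumes "psd A" "A \<in> carrier_mat N N" "i < N"
  shows "Im (A $$ (i, i)) = 0 \<and> 0 \<le> Re (A $$ (i, i))"
  using psd_quad_form[OF assms(1,2), of "\<lambda>t. if t = i then 1 else 0"] quad_form_one_point[OF assms(3)]
  by simp

lemma psd_hermitian:
  assumes "psd A" "A \<in> carrier_mat N N"
  shows "hermitian A"
  unfolding hermitian_iff[OF assms(2)]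
proof (intro allI impI)
  fix i j assume ij: "i < N" "j < N"
  show "cnj (A $$ (i, j)) = A $$ (j, i)"
  proof (cases "i = j")
    case True
    then show ?thesis using psd_index_diag[OF assms ij(1)] by (simp add: complex_eq_iff)
  next
    case False
    have "Im (A $$ (i, i) + A $$ (i, j) + A $$ (j, i) + A $$ (j, j)) = 0"
      using psd_quad_form[OF assms, of "\<lambda>t. if t = i then 1 else if t = j then 1 else 0"]
        quad_form_two_points[OF ij False, of A 1 1] by simp
    moreover have "Im (A $$ (i, i) + \<i> * A $$ (i, j) - \<i> * A $$ (j, i) + A $$ (j, j)) = 0"
      using psd_quad_form[OF assms, of "\<lambda>t. if t = i then 1 else if t = j then \<i> else 0"]
        quad_form_two_points[OF ij False, of A 1 \<i>] by (simp add: algebra_simps)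
    ultimately show ?thesis using psd_index_diag[OF assms ij(1)] psd_index_diag[OF assms ij(2)]
      by (simp add: complex_eq_iff)
  qed
qed

lemma quadratic_nonneg_imp_le:
  fixes a b c :: real
  assumes "\<And>t. 0 \<le> a * t\<^sup>2 - 2 * b * t + b * c" "0 \<le> a" "0 \<le> b" "0 \<le> c"
  shows "b \<le> a * c"
proof (cases "a = 0 \<or> b = 0")
  case True
  then show ?thesis
    using assms(1)[of "c / 2 + 1"] assms(2-4) by (auto simp: algebra_simps)
next
  case False
  then have a: "a > 0" and b: "b > 0" using assms(2,3) by auto
  have "0 \<le> a * (b / a)\<^sup>2 - 2 * b * (b / a) + b * c" by (rule assms(1))
  also have "\<dots> = b * (c - b / a)" using a by (simp add: field_simps power2_eq_square)
  finally have "b / a \<le> c" using b by (simp add: zero_le_mult_iff)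
  then show ?thesis using a by (simp add: field_simps)
qed

lemma psd_cmod_index_le:
  assumes "psd A" "A \<in> carrier_mat N N" "i < N" "j < N"
  shows "(cmod (A $$ (i, j)))\<^sup>2 \<le> Re (A $$ (i, i)) * Re (A $$ (j, j))"
proof (cases "i = j")
  case True
  then show ?thesis using psd_index_diag[OF assms(1-3)] by (simp add: cmod_def power2_eq_square)
next
  case False
  let ?z = "A $$ (j, i)"
  have h: "A $$ (i, j) = cnj ?z" using hermitian_index[OF assms(2) psd_hermitian[OF assms(1,2)] assms(4,3)] by simp
  have di: "A $$ (i, i) = of_real (Re (A $$ (i, i)))" and dj: "A $$ (j, j) = of_real (Re (A $$ (j, j)))"
    using psd_index_diag[OF assms(1-3)] psd_index_diag[OF assms(1,2,4)] by (simp_all add: complex_eq_iff)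
  have zz: "cnj ?z * ?z = of_real ((cmod ?z)\<^sup>2)" using complex_norm_square[of ?z] by (simp add: mult.commute)
  \<comment> \<open>the test vector \<open>t e\<^sub>i - z e\<^sub>j\<close>\<close>
  have "0 \<le> Re (A $$ (i, i)) * t\<^sup>2 - 2 * (cmod ?z)\<^sup>2 * t + (cmod ?z)\<^sup>2 * Re (A $$ (j, j))" for t :: real
  proof -
    have "quad_form A N (\<lambda>s. if s = i then of_real t else if s = j then - ?z else 0) =
      of_real (Re (A $$ (i, i)) * t\<^sup>2 - 2 * (cmod ?z)\<^sup>2 * t + (cmod ?z)\<^sup>2 * Re (A $$ (j, j)))"
      unfolding quad_form_two_points[OF assms(3,4) False] h
      by (subst di, subst dj) (use zz in \<open>simp add: algebra_simps power2_eq_square\<close>)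
    then show ?thesis
      using psd_quad_form[OF assms(1,2), of "\<lambda>s. if s = i then of_real t else if s = j then - ?z else 0"]
      by simp
  qed
  then have "(cmod ?z)\<^sup>2 \<le> Re (A $$ (i, i)) * Re (A $$ (j, j))"
    by (rule quadratic_nonneg_imp_le) (use psd_index_diag[OF assms(1-3)] psd_index_diag[OF assms(1,2,4)] in auto)
  then show ?thesis using h by simp
qed

lemma psd_sum_cmod_sq_le:
  assumes "psd A" "A \<in> carrier_mat N N"
  shows "(\<Sum>i<N. \<Sum>j<N. (cmod (A $$ (i, j)))\<^sup>2) \<le> (Re (mtrace A))\<^sup>2"
proof -
  have "(\<Sum>i<N. \<Sum>j<N. (cmod (A $$ (i, j)))\<^sup>2) \<le> (\<Sum>i<N. \<Sum>j<N. Re (A $$ (i, i)) * Re (A $$ (j, j)))"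
    by (intro sum_mono psd_cmod_index_le[OF assms]) auto
  also have "\<dots> = (\<Sum>i<N. Re (A $$ (i, i)))\<^sup>2" by (simp add: sum_product power2_eq_square)
  finally show ?thesis using assms(2) by (simp add: mtrace_def)
qed

lemma sum_quad_form:
  "(\<Sum>k<N. quad_form A N (f k)) = (\<Sum>a<N. \<Sum>b<N. A $$ (a, b) * (\<Sum>k<N. cnj (f k a) * f k b))"
proof -
  have "(\<Sum>k<N. quad_form A N (f k)) = (\<Sum>a<N. \<Sum>k<N. \<Sum>b<N. cnj (f k a) * A $$ (a, b) * f k b)"
    unfolding quad_form_def by (rule sum.swap)
  also have "\<dots> = (\<Sum>a<N. \<Sum>b<N. \<Sum>k<N. cnj (f k a) * A $$ (a, b) * f k b)"
    by (intro sum.cong refl sum.swap)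
  finally show ?thesis by (simp add: sum_distrib_left mult_ac)
qed

lemma hermitian_involution_gram:
  assumes U: "U \<in> carrier_mat N N" "hermitian U" "U * U = 1\<^sub>m N" and s: "s = 1 \<or> s = -1"
    and ab: "a < N" "b < N"
  shows "(\<Sum>k<N. cnj (of_bool (a = k) + of_real s * U $$ (a, k)) * (of_bool (b = k) + of_real s * U $$ (b, k))) =
         2 * of_bool (a = b) + 2 * of_real s * U $$ (b, a)"
proof -
  have "(\<Sum>k<N. U $$ (b, k) * U $$ (k, a)) = of_bool (b = a)"
    using ab U(1) arg_cong[OF U(3), of "\<lambda>M. M $$ (b, a)"]
    by (simp add: index_mult_mat_sum[OF U(1) U(1)] del: index_mult_mat(1))
  moreover have "(of_real s :: complex) * of_real s = 1" using s by auto
  moreover have "cnj (of_bool P) = of_bool P" for P by (cases P) auto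
  ultimately have "(\<Sum>k<N. cnj (of_bool (a = k) + of_real s * U $$ (a, k)) * (of_bool (b = k) + of_real s * U $$ (b, k))) =
      of_bool (a = b) + of_real s * U $$ (b, a) + of_real s * U $$ (b, a) + of_bool (b = a)"
    using ab by (simp add: hermitian_index[OF U(1,2)] algebra_simps sum.distrib sum_distrib_left[symmetric])
  then show ?thesis by simp
qed

text \<open>For a Hermitian involution \<open>U\<close> the matrix \<open>(1 + s U)\<^sup>2 / 2 = 1 + s U\<close> is positive, whence
  \<open>\<bar>tr (U A)\<bar> \<le> tr A\<close>; below, \<open>tr ((1 + s U) A (1 + s U))\<close> is summed column by column.\<close>
lemma psd_involution_mtrace_nonneg:
  assumes psd: "psd A" "A \<in> carrier_mat N N"
    and U: "U \<in> carrier_mat N N" "hermitian U" "U * U = 1\<^sub>m N" and s: "s = 1 \<or> s = -1"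
  shows "0 \<le> Re (mtrace A) + s * Re (mtrace (U * A))"
proof -
  define f where "f k t = of_bool (t = k) + of_real s * U $$ (t, k)" for k t
  have gram: "(\<Sum>k<N. cnj (f k a) * f k b) = 2 * of_bool (a = b) + 2 * of_real s * U $$ (b, a)"
    if "a < N" "b < N" for a b
    unfolding f_def by (rule hermitian_involution_gram[OF U s that])
  have "(\<Sum>k<N. quad_form A N (f k)) = (\<Sum>a<N. \<Sum>b<N. 2 * of_bool (a = b) * A $$ (a, b)
                                          + 2 * of_real s * (U $$ (b, a) * A $$ (a, b)))"
    unfolding sum_quad_form
  proof (intro sum.cong refl)
    fix a b assume "a \<in> {..<N}" "b \<in> {..<N}"
    then have ab: "a < N" "b < N" by simp_all
    show "A $$ (a, b) * (\<Sum>k<N. cnj (f k a) * f k b) =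
        2 * of_bool (a = b) * A $$ (a, b) + 2 * of_real s * (U $$ (b, a) * A $$ (a, b))"
      unfolding gram[OF ab] by (simp add: algebra_simps)
  qed
  also have "\<dots> = 2 * (\<Sum>a<N. A $$ (a, a)) + 2 * of_real s * (\<Sum>a<N. \<Sum>b<N. U $$ (b, a) * A $$ (a, b))"
    by (simp add: sum.distrib sum_distrib_left mult.assoc of_bool_def if_distrib[of "\<lambda>x. x * _"]
        if_distrib[of "\<lambda>x. _ * x"] sum.delta sum.delta' cong: if_cong)
  also have "\<dots> = 2 * mtrace A + 2 * of_real s * mtrace (U * A)"
    unfolding mtrace_mult[OF U(1) psd(2)] using psd(2) by (simp add: mtrace_def sum.swap[of "\<lambda>a b. U $$ (b, a) * A $$ (a, b)"])
  finally have "Re (\<Sum>k<N. quad_form A N (f k)) = 2 * Re (mtrace A) + 2 * s * Re (mtrace (U * A))"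
    by simp
  moreover have "0 \<le> Re (\<Sum>k<N. quad_form A N (f k))"
    unfolding Re_sum by (intro sum_nonneg) (use psd_quad_form[OF psd] in auto)
  ultimately show ?thesis by simp
qed

section \<open>Pauli coefficients\<close>

abbreviation pauli_coeff :: "complex mat \<Rightarrow> nat list \<Rightarrow> complex" where
  "pauli_coeff A P \<equiv> mtrace (pauli_string P * A)"

definition pauli_moment :: "nat \<Rightarrow> nat \<Rightarrow> complex mat \<Rightarrow> real" where
  "pauli_moment e n A = (\<Sum>P\<in>pauli_labels n. (Re (pauli_coeff A P)) ^ e)"

lemma M2t_pauli_moment: "M2t n \<rho> = - log 2 (pauli_moment 4 n \<rho> / pauli_moment 2 n \<rho>)"
  by (simp add: M2t_def pauli_moment_def)

lemma pauli_coeff_replicate_0: "A \<in> carrier_mat (2 ^ n) (2 ^ n) \<Longrightarrow> pauli_coeff A (replicate n 0) = mtrace A"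
  by (simp add: pauli_string_replicate_0)

lemma pauli_coeff_real:
  "A \<in> carrier_mat (2 ^ n) (2 ^ n) \<Longrightarrow> hermitian A \<Longrightarrow> P \<in> pauli_labels n \<Longrightarrow> Im (pauli_coeff A P) = 0"
  by (rule hermitian_mtrace_mult_real[OF pauli_label_carrier hermitian_pauli_string]) auto

lemma pauli_expansion:
  assumes A: "A \<in> carrier_mat (2 ^ n) (2 ^ n)" and ij: "i < 2 ^ n" "j < 2 ^ n"
  shows "(\<Sum>P\<in>pauli_labels n. pauli_coeff A P * pauli_string P $$ (i, j)) = 2 ^ n * A $$ (i, j)"
proof -
  have "(\<Sum>P\<in>pauli_labels n. pauli_coeff A P * pauli_string P $$ (i, j)) =
     (\<Sum>P\<in>pauli_labels n. \<Sum>a<2 ^ n. \<Sum>b<2 ^ n. A $$ (b, a) * (pauli_string P $$ (a, b) * pauli_string P $$ (i, j)))"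
    by (intro sum.cong refl) (simp add: mtrace_mult[OF pauli_label_carrier A] sum_distrib_left mult_ac)
  also have "\<dots> = (\<Sum>a<2 ^ n. \<Sum>b<2 ^ n. A $$ (b, a) *
                    (\<Sum>P\<in>pauli_labels n. pauli_string P $$ (a, b) * pauli_string P $$ (i, j)))"
    by (simp add: sum_distrib_left sum.swap[of _ "pauli_labels n"])
  also have "\<dots> = (\<Sum>a<2 ^ n. \<Sum>b<2 ^ n. if b = i then if a = j then 2 ^ n * A $$ (i, j) else 0 else 0)"
    by (intro sum.cong refl) (auto simp: pauli_string_completeness ij)
  also have "\<dots> = 2 ^ n * A $$ (i, j)"
    using ij by simp
  finally show ?thesis .
qed

lemma pauli_parseval:
  assumes A: "A \<in> carrier_mat (2 ^ n) (2 ^ n)"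
  shows "(\<Sum>P\<in>pauli_labels n. (cmod (pauli_coeff A P))\<^sup>2) =
         2 ^ n * (\<Sum>i<2 ^ n. \<Sum>j<2 ^ n. (cmod (A $$ (i, j)))\<^sup>2)"
proof -
  have "cnj (pauli_coeff A P) = (\<Sum>j<2 ^ n. \<Sum>i<2 ^ n. cnj (A $$ (i, j)) * pauli_string P $$ (i, j))"
    if P: "P \<in> pauli_labels n" for P
    unfolding mtrace_mult[OF pauli_label_carrier[OF P] A]
    by (simp add: hermitian_index[OF pauli_label_carrier[OF P] hermitian_pauli_string] mult.commute)
  then have "(\<Sum>P\<in>pauli_labels n. pauli_coeff A P * cnj (pauli_coeff A P)) =
     (\<Sum>j<2 ^ n. \<Sum>i<2 ^ n. cnj (A $$ (i, j)) *
        (\<Sum>P\<in>pauli_labels n. pauli_coeff A P * pauli_string P $$ (i, j)))"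
    by (simp add: sum_distrib_left sum.swap[of _ "pauli_labels n"] mult_ac)
  also have "\<dots> = (\<Sum>j<2 ^ n. \<Sum>i<2 ^ n. 2 ^ n * (A $$ (i, j) * cnj (A $$ (i, j))))"
    by (simp add: pauli_expansion[OF A] mult_ac)
  also have "\<dots> = 2 ^ n * (\<Sum>i<2 ^ n. \<Sum>j<2 ^ n. A $$ (i, j) * cnj (A $$ (i, j)))"
    by (simp add: sum_distrib_left) (rule sum.swap)
  finally have "(\<Sum>P\<in>pauli_labels n. of_real ((cmod (pauli_coeff A P))\<^sup>2)) =
      2 ^ n * (\<Sum>i<2 ^ n. \<Sum>j<2 ^ n. (of_real ((cmod (A $$ (i, j)))\<^sup>2) :: complex))"
    by (simp only: complex_norm_square)
  then have "of_real (\<Sum>P\<in>pauli_labels n. (cmod (pauli_coeff A P))\<^sup>2) =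
      (of_real (2 ^ n * (\<Sum>i<2 ^ n. \<Sum>j<2 ^ n. (cmod (A $$ (i, j)))\<^sup>2)) :: complex)"
    by simp
  then show ?thesis by (simp only: of_real_eq_iff)
qed

lemma pauli_coeff_pauli_combination:
  assumes H: "H \<subseteq> pauli_labels n" and P: "P \<in> pauli_labels n"
  shows "pauli_coeff (mat (2 ^ n) (2 ^ n) (\<lambda>(i, j). \<Sum>Q\<in>H. c Q * pauli_string Q $$ (i, j))) P =
         2 ^ n * (if P \<in> H then c P else 0)"
proof -
  define M where "M = mat (2 ^ n) (2 ^ n) (\<lambda>(i, j). \<Sum>Q\<in>H. c Q * pauli_string Q $$ (i, j))"
  have M: "M \<in> carrier_mat (2 ^ n) (2 ^ n)" by (simp add: M_def)
  have "pauli_coeff M P = (\<Sum>a<2 ^ n. \<Sum>b<2 ^ n. \<Sum>Q\<in>H. c Q * (pauli_string P $$ (a, b) * pauli_string Q $$ (b, a)))"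
    unfolding mtrace_mult[OF pauli_label_carrier[OF P] M]
    by (intro sum.cong refl) (simp add: M_def sum_distrib_left mult_ac)
  also have "\<dots> = (\<Sum>Q\<in>H. c Q * mtrace (pauli_string P * pauli_string Q))"
  proof -
    have "mtrace (pauli_string P * pauli_string Q) =
          (\<Sum>a<2 ^ n. \<Sum>b<2 ^ n. pauli_string P $$ (a, b) * pauli_string Q $$ (b, a))" if "Q \<in> H" for Q
      using H that by (intro mtrace_mult[OF pauli_label_carrier[OF P] pauli_label_carrier]) auto
    then show ?thesis
      by (simp add: sum_distrib_left sum.swap[of _ "{..<2 ^ n}" H])
  qed
  also have "\<dots> = (\<Sum>Q\<in>H. if P = Q then 2 ^ n * c P else 0)"
    using H P by (intro sum.cong refl) (auto simp: mtrace_pauli_string_mult)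
  also have "\<dots> = 2 ^ n * (if P \<in> H then c P else 0)"
    using finite_subset[OF H] by (simp add: sum.delta')
  finally show ?thesis unfolding M_def .
qed

lemma density_matrix_hermitian: "density_matrix n \<rho> \<Longrightarrow> hermitian \<rho>"
  unfolding density_matrix_def using psd_hermitian by blast

lemma density_matrix_pauli_coeff_real:
  "density_matrix n \<rho> \<Longrightarrow> P \<in> pauli_labels n \<Longrightarrow> pauli_coeff \<rho> P = of_real (Re (pauli_coeff \<rho> P))"
  using pauli_coeff_real[of \<rho> n P] density_matrix_hermitian[of n \<rho>]
  by (simp add: complex_eq_iff density_matrix_def)

lemma density_matrix_pauli_coeff_bound:
  assumes "density_matrix n \<rho>" "P \<in> pauli_labels n"
  shows "\<bar>Re (pauli_coeff \<rho> P)\<bar> \<le> 1"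
  using psd_involution_mtrace_nonneg[of \<rho> "2 ^ n" "pauli_string P" 1]
    psd_involution_mtrace_nonneg[of \<rho> "2 ^ n" "pauli_string P" "-1"] assms
  by (auto simp: density_matrix_def pauli_label_carrier hermitian_pauli_string pauli_string_square
      length_pauli_label)

lemma pauli_moment_ge_1:
  assumes "density_matrix n \<rho>" "even e"
  shows "1 \<le> pauli_moment e n \<rho>"
proof -
  have "Re (pauli_coeff \<rho> (replicate n 0)) ^ e \<le> pauli_moment e n \<rho>"
    unfolding pauli_moment_def
    by (rule member_le_sum) (use assms(2) in \<open>auto simp: replicate_0_pauli_label\<close>)
  then show ?thesis using assms by (simp add: pauli_coeff_replicate_0 density_matrix_def)
qed

lemma pauli_moment_2_le:
  assumes "density_matrix n \<rho>"
  shows "pauli_moment 2 n \<rho> \<le> 2 ^ n"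
proof -
  have \<rho>: "\<rho> \<in> carrier_mat (2 ^ n) (2 ^ n)" "psd \<rho>" "mtrace \<rho> = 1"
    using assms by (auto simp: density_matrix_def)
  have "pauli_moment 2 n \<rho> = (\<Sum>P\<in>pauli_labels n. (cmod (pauli_coeff \<rho> P))\<^sup>2)"
    unfolding pauli_moment_def
    by (intro sum.cong refl) (use pauli_coeff_real[OF \<rho>(1) density_matrix_hermitian[OF assms]] in \<open>simp add: cmod_power2\<close>)
  also have "\<dots> = 2 ^ n * (\<Sum>i<2 ^ n. \<Sum>j<2 ^ n. (cmod (\<rho> $$ (i, j)))\<^sup>2)"
    by (rule pauli_parseval[OF \<rho>(1)])
  also have "\<dots> \<le> 2 ^ n * 1"
    using psd_sum_cmod_sq_le[OF \<rho>(2,1)] \<rho>(3) by (intro mult_left_mono) auto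
  finally show ?thesis by simp
qed

section \<open>Stabilizer states\<close>

lemma sum_power4_eq_sum_power2_iff:
  fixes a :: "'a \<Rightarrow> real"
  assumes L: "finite L" and bound: "\<And>x. x \<in> L \<Longrightarrow> \<bar>a x\<bar> \<le> 1"
  shows "(\<Sum>x\<in>L. a x ^ 4) = (\<Sum>x\<in>L. a x ^ 2) \<longleftrightarrow> (\<forall>x\<in>L. a x \<in> {-1, 0, 1})"
proof -
  have factor: "a x ^ 2 - a x ^ 4 = a x ^ 2 * (1 - a x ^ 2)" for x
    by (simp add: algebra_simps power2_eq_square power4_eq_xxxx)
  have nonneg: "0 \<le> a x ^ 2 - a x ^ 4" if "x \<in> L" for x
    unfolding factor using abs_square_le_1[of "a x"] bound[OF that] by simp
  have "(\<Sum>x\<in>L. a x ^ 4) = (\<Sum>x\<in>L. a x ^ 2) \<longleftrightarrow> (\<Sum>x\<in>L. a x ^ 2 - a x ^ 4) = 0"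
    by (auto simp: sum_subtractf)
  also have "\<dots> \<longleftrightarrow> (\<forall>x\<in>L. a x ^ 2 * (1 - a x ^ 2) = 0)"
    using sum_nonneg_eq_0_iff[OF L nonneg] by (simp add: factor)
  also have "\<dots> \<longleftrightarrow> (\<forall>x\<in>L. a x \<in> {-1, 0, 1})"
    by (auto simp: power2_eq_1_iff)
  finally show ?thesis .
qed

lemma M2t_eq_0_iff_pauli_coeffs:
  assumes \<rho>: "density_matrix n \<rho>"
  shows "M2t n \<rho> = 0 \<longleftrightarrow> (\<forall>P\<in>pauli_labels n. Re (pauli_coeff \<rho> P) \<in> {-1, 0, 1})"
proof -
  have pos: "1 \<le> pauli_moment 4 n \<rho>" "1 \<le> pauli_moment 2 n \<rho>"
    by (simp_all add: pauli_moment_ge_1[OF \<rho>])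
  then have "0 < pauli_moment 4 n \<rho> / pauli_moment 2 n \<rho>" by simp
  then have "M2t n \<rho> = 0 \<longleftrightarrow> pauli_moment 4 n \<rho> = pauli_moment 2 n \<rho>"
    using pos by (auto simp: M2t_pauli_moment log_def ln_eq_zero_iff divide_eq_1_iff)
  also have "\<dots> \<longleftrightarrow> (\<forall>P\<in>pauli_labels n. Re (pauli_coeff \<rho> P) \<in> {-1, 0, 1})"
    unfolding pauli_moment_def
    by (rule sum_power4_eq_sum_power2_iff) (simp_all add: density_matrix_pauli_coeff_bound[OF \<rho>])
  finally show ?thesis .
qed

lemma stabilizer_form_pauli_coeff:
  assumes G: "G \<subseteq> pauli_labels n - {replicate n 0}" and P: "P \<in> pauli_labels n"
  shows "pauli_coeff (mat (2 ^ n) (2 ^ n) (\<lambda>(i, j). (if i = j then 1 else 0) / 2 ^ n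
            + (1 / 2 ^ n) * (\<Sum>Q\<in>G. \<phi> Q * pauli_string Q $$ (i, j)))) P =
         (if P = replicate n 0 then 1 else if P \<in> G then \<phi> P else 0)"
proof -
  define z where "z = replicate n (0::nat)"
  define c where "c Q = (if Q = z then 1 else \<phi> Q) / 2 ^ n" for Q
  have zG: "z \<notin> G" and finG: "finite G" using G finite_subset[of G "pauli_labels n"] by (auto simp: z_def)
  have H: "insert z G \<subseteq> pauli_labels n" using G by (auto simp: z_def replicate_0_pauli_label)
  have "mat (2 ^ n) (2 ^ n) (\<lambda>(i, j). (if i = j then 1 else 0) / 2 ^ n
            + (1 / 2 ^ n) * (\<Sum>Q\<in>G. \<phi> Q * pauli_string Q $$ (i, j))) =
        mat (2 ^ n) (2 ^ n) (\<lambda>(i, j). \<Sum>Q\<in>insert z G. c Q * pauli_string Q $$ (i, j))"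
    using zG finG
    by (intro eq_matI) (auto simp: c_def z_def pauli_string_replicate_0 sum_distrib_left intro!: sum.cong)
  then show ?thesis
    using pauli_coeff_pauli_combination[OF H P, of c] zG by (auto simp: c_def z_def)
qed

lemma stabilizer_state_pauli_coeffs:
  assumes "stabilizer_state n \<chi>"
  shows "density_matrix n \<chi>" and "\<forall>P\<in>pauli_labels n. Re (pauli_coeff \<chi> P) \<in> {-1, 0, 1}"
proof -
  from assms obtain G \<phi> where G: "G \<subseteq> pauli_labels n - {replicate n 0}"
    and \<phi>: "\<forall>P\<in>G. \<phi> P \<in> {-1, 1 :: complex}"
    and \<chi>: "\<chi> = mat (2 ^ n) (2 ^ n) (\<lambda>(i, j). (if i = j then 1 else 0) / 2 ^ n
              + (1 / 2 ^ n) * (\<Sum>P\<in>G. \<phi> P * pauli_string P $$ (i, j)))"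
    and psd: "psd \<chi>"
    unfolding stabilizer_state_def by blast
  note coeff = stabilizer_form_pauli_coeff[OF G, of _ \<phi>, folded \<chi>]
  have "mtrace \<chi> = 1"
    using coeff[OF replicate_0_pauli_label] \<chi> by (simp add: pauli_coeff_replicate_0)
  then show "density_matrix n \<chi>" using psd \<chi> by (simp add: density_matrix_def)
  show "\<forall>P\<in>pauli_labels n. Re (pauli_coeff \<chi> P) \<in> {-1, 0, 1}"
    using coeff \<phi> by auto
qed

lemma card_pauli_support:
  assumes "density_matrix n \<rho>" and trits: "\<forall>P\<in>pauli_labels n. Re (pauli_coeff \<rho> P) \<in> {-1, 0, 1}"
  shows "card {P \<in> pauli_labels n. Re (pauli_coeff \<rho> P) \<noteq> 0} \<le> 2 ^ n"
proof -
  have "pauli_moment 2 n \<rho> = (\<Sum>P\<in>pauli_labels n. if Re (pauli_coeff \<rho> P) \<noteq> 0 then 1 else 0)"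
    unfolding pauli_moment_def using trits by (intro sum.cong refl) auto
  also have "\<dots> = real (card {P \<in> pauli_labels n. Re (pauli_coeff \<rho> P) \<noteq> 0})"
    by (simp add: sum.inter_filter[symmetric])
  finally show ?thesis using pauli_moment_2_le[OF assms(1)] by simp
qed

lemma pauli_expansion_stabilizer_form:
  assumes A: "A \<in> carrier_mat (2 ^ n) (2 ^ n)" "mtrace A = 1"
    and G: "G \<subseteq> pauli_labels n - {replicate n 0}"
    and vanish: "\<And>P. P \<in> pauli_labels n - {replicate n 0} - G \<Longrightarrow> pauli_coeff A P = 0"
  shows "A = mat (2 ^ n) (2 ^ n) (\<lambda>(i, j). (if i = j then 1 else 0) / 2 ^ n
              + (1 / 2 ^ n) * (\<Sum>P\<in>G. pauli_coeff A P * pauli_string P $$ (i, j)))" (is "_ = ?M")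
proof (rule eq_matI)
  fix i j assume "i < dim_row ?M" "j < dim_col ?M"
  then have ij: "i < 2 ^ n" "j < 2 ^ n" by simp_all
  define z where "z = replicate n (0::nat)"
  have z: "z \<in> pauli_labels n" by (simp add: z_def replicate_0_pauli_label)
  have "2 ^ n * A $$ (i, j) = (\<Sum>P\<in>pauli_labels n. pauli_coeff A P * pauli_string P $$ (i, j))"
    by (rule pauli_expansion[OF A(1) ij, symmetric])
  also have "\<dots> = pauli_coeff A z * pauli_string z $$ (i, j) +
                   (\<Sum>P\<in>pauli_labels n - {z}. pauli_coeff A P * pauli_string P $$ (i, j))"
    using z by (intro sum.remove) simp_all
  also have "(\<Sum>P\<in>pauli_labels n - {z}. pauli_coeff A P * pauli_string P $$ (i, j)) =
             (\<Sum>P\<in>G. pauli_coeff A P * pauli_string P $$ (i, j))"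
    using G vanish by (intro sum.mono_neutral_right) (auto simp: z_def)
  finally have "2 ^ n * A $$ (i, j) = (if i = j then 1 else 0) + (\<Sum>P\<in>G. pauli_coeff A P * pauli_string P $$ (i, j))"
    using A ij by (simp add: z_def pauli_string_replicate_0)
  then show "A $$ (i, j) = ?M $$ (i, j)"
    using ij by (simp add: field_simps)
qed (use A in simp_all)

lemma pauli_coeffs_imp_stabilizer_state:
  assumes \<rho>: "density_matrix n \<rho>" and trits: "\<forall>P\<in>pauli_labels n. Re (pauli_coeff \<rho> P) \<in> {-1, 0, 1}"
  shows "stabilizer_state n \<rho>"
proof -
  define z where "z = replicate n (0::nat)"
  define G where "G = {P \<in> pauli_labels n - {z}. Re (pauli_coeff \<rho> P) \<noteq> 0}"
  have \<rho>C: "\<rho> \<in> carrier_mat (2 ^ n) (2 ^ n)" and psd: "psd \<rho>" and tr: "mtrace \<rho> = 1"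
    using \<rho> by (auto simp: density_matrix_def)
  note real = density_matrix_pauli_coeff_real[OF \<rho>]
  have G: "G \<subseteq> pauli_labels n - {replicate n 0}" by (auto simp: G_def z_def)
  have "Re (pauli_coeff \<rho> z) = 1" using \<rho>C tr by (simp add: z_def pauli_coeff_replicate_0)
  then have "insert z G = {P \<in> pauli_labels n. Re (pauli_coeff \<rho> P) \<noteq> 0}"
    by (auto simp: G_def z_def replicate_0_pauli_label)
  then have "card (insert z G) \<le> 2 ^ n" using card_pauli_support[OF \<rho> trits] by simp
  moreover have "finite G" "z \<notin> G" by (auto simp: G_def)
  ultimately have card: "card G \<le> 2 ^ n - 1" by simp
  have \<phi>: "\<forall>P\<in>G. pauli_coeff \<rho> P \<in> {-1, 1}"
  proof
    fix P assume P: "P \<in> G"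
    then have "Re (pauli_coeff \<rho> P) \<in> {-1, 1}" using trits by (auto simp: G_def)
    then show "pauli_coeff \<rho> P \<in> {-1, 1}" using P by (subst real) (auto simp: G_def)
  qed
  have "pauli_coeff \<rho> P = 0" if "P \<in> pauli_labels n - {replicate n 0} - G" for P
    using that by (subst real) (auto simp: G_def z_def)
  then have "\<rho> = mat (2 ^ n) (2 ^ n) (\<lambda>(i, j). (if i = j then 1 else 0) / 2 ^ n
              + (1 / 2 ^ n) * (\<Sum>P\<in>G. pauli_coeff \<rho> P * pauli_string P $$ (i, j)))"
    by (rule pauli_expansion_stabilizer_form[OF \<rho>C tr G])
  then show ?thesis
    unfolding stabilizer_state_def
    by (intro exI[of _ G] exI[of _ "pauli_coeff \<rho>"] conjI G card \<phi> psd)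
qed

lemma M2t_eq_0_iff_stabilizer_state:
  assumes "density_matrix n \<rho>"
  shows "M2t n \<rho> = 0 \<longleftrightarrow> stabilizer_state n \<rho>"
  using M2t_eq_0_iff_pauli_coeffs[OF assms] pauli_coeffs_imp_stabilizer_state[OF assms]
    stabilizer_state_pauli_coeffs(2) by blast

lemma M2t_stabilizer_state: "stabilizer_state n \<chi> \<Longrightarrow> M2t n \<chi> = 0"
  using M2t_eq_0_iff_stabilizer_state stabilizer_state_pauli_coeffs(1) by blast

section \<open>Tensor products\<close>

lemma pauli_coeff_kron:
  assumes P: "P \<in> pauli_labels m" and Q: "Q \<in> pauli_labels k"
    and A: "A \<in> carrier_mat (2 ^ m) (2 ^ m)" and B: "B \<in> carrier_mat (2 ^ k) (2 ^ k)"
  shows "pauli_coeff (kron A B) (P @ Q) = pauli_coeff A P * pauli_coeff B Q"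
proof -
  note cP = pauli_label_carrier[OF P] and cQ = pauli_label_carrier[OF Q]
  show ?thesis
    unfolding pauli_string_append kron_mult[OF cP cQ A B]
    by (rule mtrace_kron[OF mult_carrier_mat[OF cP A] mult_carrier_mat[OF cQ B]])
qed

lemma pauli_moment_kron:
  assumes A: "A \<in> carrier_mat (2 ^ m) (2 ^ m)" "hermitian A"
    and B: "B \<in> carrier_mat (2 ^ k) (2 ^ k)" "hermitian B"
  shows "pauli_moment e (m + k) (kron A B) = pauli_moment e m A * pauli_moment e k B"
  unfolding pauli_moment_def sum_pauli_labels_add sum_product
  by (intro sum.cong refl)
    (simp add: pauli_coeff_kron A(1) B(1) pauli_coeff_real[OF A] pauli_coeff_real[OF B] power_mult_distrib)

lemma M2t_kron:
  assumes A: "density_matrix m A" and B: "density_matrix k B"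
  shows "M2t (m + k) (kron A B) = M2t m A + M2t k B"
proof -
  have C: "A \<in> carrier_mat (2 ^ m) (2 ^ m)" "B \<in> carrier_mat (2 ^ k) (2 ^ k)"
    using A B by (simp_all add: density_matrix_def)
  have pos: "0 < pauli_moment e m A" "0 < pauli_moment e k B" if "even e" for e
    using pauli_moment_ge_1[OF A that] pauli_moment_ge_1[OF B that] by simp_all
  have "pauli_moment e (m + k) (kron A B) = pauli_moment e m A * pauli_moment e k B" for e
    by (rule pauli_moment_kron[OF C(1) density_matrix_hermitian[OF A] C(2) density_matrix_hermitian[OF B]])
  then have ratio: "pauli_moment 4 (m + k) (kron A B) / pauli_moment 2 (m + k) (kron A B) =
      (pauli_moment 4 m A / pauli_moment 2 m A) * (pauli_moment 4 k B / pauli_moment 2 k B)"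
    by simp
  then show ?thesis
    unfolding M2t_pauli_moment ratio using pos[of 2] pos[of 4] by (subst log_mult) simp_all
qed

section \<open>Clifford conjugation\<close>

lemma clifford_conj_pauli_string:
  assumes "clifford n C"
  shows "\<exists>f c. bij_betw f (pauli_labels n) (pauli_labels n) \<and>
    (\<forall>P\<in>pauli_labels n. cmod (c P) = 1 \<and> C * pauli_string P * dagger C = c P \<cdot>\<^sub>m pauli_string (f P))"
proof -
  let ?L = "pauli_labels n"
  have U: "unitary (2 ^ n) C" using assms by (simp add: clifford_def)
  have "\<forall>P\<in>?L. \<exists>Q\<in>?L. \<exists>c\<in>{1, -1, \<i>, - \<i>}. C * pauli_string P * dagger C = c \<cdot>\<^sub>m pauli_string Q"
    using assms by (simp add: clifford_def)
  then obtain f where f: "\<And>P. P \<in> ?L \<Longrightarrow> f P \<in> ?L"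
    and "\<forall>P\<in>?L. \<exists>c. c \<in> {1, -1, \<i>, - \<i>} \<and> C * pauli_string P * dagger C = c \<cdot>\<^sub>m pauli_string (f P)"
    using bchoice[of ?L] by (metis (no_types, lifting))
  then obtain c where c: "\<And>P. P \<in> ?L \<Longrightarrow> c P \<in> {1, -1, \<i>, - \<i>}"
    and conj: "\<And>P. P \<in> ?L \<Longrightarrow> C * pauli_string P * dagger C = c P \<cdot>\<^sub>m pauli_string (f P)"
    using bchoice[of ?L] by (metis (no_types, lifting))
  have "inj_on f ?L"
  proof (rule inj_onI)
    fix P P' assume P: "P \<in> ?L" and P': "P' \<in> ?L" and eq: "f P = f P'"
    \<comment> \<open>conjugation preserves \<open>tr (P P')\<close>, which is nonzero only for \<open>P = P'\<close>\<close>
    have "mtrace (pauli_string P * pauli_string P') =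
          mtrace ((C * pauli_string P * dagger C) * (C * pauli_string P' * dagger C))"
      by (rule unitary_conj_mtrace_mult[OF U pauli_label_carrier[OF P] pauli_label_carrier[OF P'], symmetric])
    also have "\<dots> = c P * c P' * 2 ^ n"
      using f[OF P] by (simp add: conj P P' eq mtrace_smult_mult[OF pauli_label_carrier pauli_label_carrier]
          mtrace_pauli_string_mult)
    finally have "mtrace (pauli_string P * pauli_string P') \<noteq> 0" using c[OF P] c[OF P'] by auto
    then show "P = P'" using mtrace_pauli_string_mult[OF P P'] by (simp split: if_splits)
  qed
  moreover have "f ` ?L \<subseteq> ?L" using f by auto
  ultimately have "bij_betw f ?L ?L" by (simp add: bij_betw_def endo_inj_surj)
  moreover have "cmod (c P) = 1" if "P \<in> ?L" for P using c[OF that] by auto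
  ultimately show ?thesis using conj by (intro exI[of _ f] exI[of _ c]) simp
qed

lemma pauli_moment_clifford:
  assumes C: "clifford n C" and A: "A \<in> carrier_mat (2 ^ n) (2 ^ n)" "hermitian A" and e: "even e"
  shows "pauli_moment e n (C * A * dagger C) = pauli_moment e n A"
proof -
  let ?L = "pauli_labels n" and ?A' = "C * A * dagger C"
  obtain f c where f: "bij_betw f ?L ?L"
    and conj: "\<forall>P\<in>?L. cmod (c P) = 1 \<and> C * pauli_string P * dagger C = c P \<cdot>\<^sub>m pauli_string (f P)"
    using clifford_conj_pauli_string[OF C] by blast
  have U: "unitary (2 ^ n) C" using C unfolding clifford_def by blast
  then have CC: "C \<in> carrier_mat (2 ^ n) (2 ^ n)" by (simp add: unitary_def)
  have A': "?A' \<in> carrier_mat (2 ^ n) (2 ^ n)" "hermitian ?A'"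
    using CC A dagger_carrier[OF CC] hermitian_conj[OF CC A] by auto
  have fL: "f P \<in> ?L" if "P \<in> ?L" for P using f that by (auto simp: bij_betw_def)
  have coeff: "c P * pauli_coeff ?A' (f P) = pauli_coeff A P" if P: "P \<in> ?L" for P
  proof -
    have "c P * pauli_coeff ?A' (f P) = mtrace ((c P \<cdot>\<^sub>m pauli_string (f P)) * ?A')"
      using pauli_label_carrier[OF fL[OF P]] A'(1)
      by (simp add: mult_smult_assoc_mat[of _ "2 ^ n" "2 ^ n" _ "2 ^ n"] mtrace_smult[of _ "2 ^ n"])
    also have "\<dots> = pauli_coeff A P"
      using conj[rule_format, OF P] unitary_conj_mtrace_mult[OF U pauli_label_carrier[OF P] A(1)] by simp
    finally show ?thesis .
  qed
  have "Re (pauli_coeff ?A' (f P)) ^ 2 = Re (pauli_coeff A P) ^ 2" if P: "P \<in> ?L" for P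
  proof -
    have "cmod (pauli_coeff ?A' (f P)) = cmod (pauli_coeff A P)"
      using arg_cong[OF coeff[OF P], of cmod] conj[rule_format, OF P] by (simp add: norm_mult)
    then have "(cmod (pauli_coeff ?A' (f P)))\<^sup>2 = (cmod (pauli_coeff A P))\<^sup>2" by simp
    then show ?thesis
      using pauli_coeff_real[OF A' fL[OF P]] pauli_coeff_real[OF A P] by (simp add: cmod_power2)
  qed
  then have "Re (pauli_coeff ?A' (f P)) ^ e = Re (pauli_coeff A P) ^ e" if "P \<in> ?L" for P
    using e that by (metis evenE power_mult)
  then have "(\<Sum>P\<in>?L. Re (pauli_coeff ?A' (f P)) ^ e) = pauli_moment e n A"
    unfolding pauli_moment_def by (rule sum.cong[OF refl])
  moreover have "(\<Sum>P\<in>?L. Re (pauli_coeff ?A' (f P)) ^ e) = pauli_moment e n ?A'"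
    unfolding pauli_moment_def by (rule sum.reindex_bij_betw[OF f])
  ultimately show ?thesis by simp
qed

lemma M2t_clifford:
  assumes "density_matrix n \<rho>" "clifford n C"
  shows "M2t n (C * \<rho> * dagger C) = M2t n \<rho>"
  using assms pauli_moment_clifford[OF assms(2) _ density_matrix_hermitian[OF assms(1)]]
  by (simp add: M2t_pauli_moment density_matrix_def)

theorem mainTheorem4:
  fixes n :: nat
  assumes "n \<ge> 1"
  shows "(\<forall>\<rho>. density_matrix n \<rho> \<longrightarrow> (M2t n \<rho> = 0 \<longleftrightarrow> stabilizer_state n \<rho>))
       \<and> (\<forall>\<rho> C. density_matrix n \<rho> \<longrightarrow> clifford n C \<longrightarrow>
              M2t n (C * \<rho> * dagger C) = M2t n \<rho>)
       \<and> (\<forall>m k \<rho> \<sigma>. m \<ge> 1 \<longrightarrow> k \<ge> 1 \<longrightarrow> density_matrix m \<rho> \<longrightarrow> density_matrix k \<sigma> \<longrightarrow>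
              M2t (m + k) (kron \<rho> \<sigma>) = M2t m \<rho> + M2t k \<sigma>)
       \<and> (\<forall>m k \<rho> S. m \<ge> 1 \<longrightarrow> k \<ge> 1 \<longrightarrow> density_matrix m \<rho> \<longrightarrow> stabilizer_state k S \<longrightarrow>
              M2t (m + k) (kron \<rho> S) = M2t m \<rho>)"
proof (intro conjI allI impI)
  fix \<rho> assume "density_matrix n \<rho>"
  then show "M2t n \<rho> = 0 \<longleftrightarrow> stabilizer_state n \<rho>" by (rule M2t_eq_0_iff_stabilizer_state)
next
  fix \<rho> C assume "density_matrix n \<rho>" "clifford n C"
  then show "M2t n (C * \<rho> * dagger C) = M2t n \<rho>" by (rule M2t_clifford)
next
  fix m k :: nat and \<rho> \<sigma> assume "density_matrix m \<rho>" "density_matrix k \<sigma>"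
  then show "M2t (m + k) (kron \<rho> \<sigma>) = M2t m \<rho> + M2t k \<sigma>" by (rule M2t_kron)
next
  fix m k :: nat and \<rho> S assume "density_matrix m \<rho>" "stabilizer_state k S"
  then show "M2t (m + k) (kron \<rho> S) = M2t m \<rho>"
    using M2t_kron stabilizer_state_pauli_coeffs(1) M2t_stabilizer_state by simp
qed

end
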